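(* If $f\in\mathcal{G}=\mathcal{G}(1)$, then $\frac12\le \det T_{3,1}(f)\le 1$, and both bounds are sharp.
   Context: $\mathbb{D}=\{z\in\mathbb{C}:|z|<1\}$. $\mathcal{A}$ is the class of analytic functions $f$ on $\mathbb{D}$ with $f(0)=0$, $f'(0)=1$, written $f(z)=z+a_2z^2+a_3z^3+\cdots$. For $0<\delta\le1$, $\mathcal{G}(\delta)=\{f\in\mathcal{A}: \mathrm{Re}[1+zf''(z)/f'(z)]<1+\delta/2 \text{ for all } z\in\mathbb{D}\}$; here $\delta=1$. For $f\in\mathcal{A}$, $\det T_{3,1}(f)=2\,\mathrm{Re}(a_2^2\overline{a_3})-2|a_2|^2-|a_3|^2+1$ is the determinant of the Hermitian Toeplitz matrix $\begin{pmatrix}1&a_2&a_3\\ \overline{a_2}&1&a_2\\ \overline{a_3}&\overline{a_2}&1\end{pmatrix}$. *)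

theory Defs
  imports "HOL-Analysis.Analysis"
begin

definition tcoeff :: "(complex \<Rightarrow> complex) \<Rightarrow> nat \<Rightarrow> complex" where
  "tcoeff f n = (deriv ^^ n) f 0 / of_nat (fact n)"

definition classA :: "(complex \<Rightarrow> complex) \<Rightarrow> bool" where
  "classA f \<longleftrightarrow> f holomorphic_on ball 0 1 \<and> f 0 = 0 \<and> deriv f 0 = 1"

text \<open>Class G(delta): Re[1 + z f''(z)/f'(z)] < 1 + delta/2 on the disk
  (the quotient being defined requires f'(z) nonzero).\<close>
definition classG :: "real \<Rightarrow> (complex \<Rightarrow> complex) \<Rightarrow> bool" where
  "classG \<delta> f \<longleftrightarrow> classA f \<and>
     (\<forall>z\<in>ball 0 1. deriv f z \<noteq> 0 \<and>
        Re (1 + z * deriv (deriv f) z / deriv f z) < 1 + \<delta> / 2)"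

definition detT31 :: "(complex \<Rightarrow> complex) \<Rightarrow> real" where
  "detT31 f = 2 * Re ((tcoeff f 2)\<^sup>2 * cnj (tcoeff f 3)) - 2 * (cmod (tcoeff f 2))\<^sup>2
              - (cmod (tcoeff f 3))\<^sup>2 + 1"

end

theory Submission
  imports Defs "HOL-Complex_Analysis.Complex_Analysis"
begin

text \<open>Write \<open>A = f''(0)\<close> and \<open>B = f'''(0)\<close>. For \<open>f \<in> G(1)\<close> the function \<open>p = z f''/f'\<close>
  takes values in the half-plane \<open>Re p < 1/2\<close>, which the Cayley map \<open>p \<mapsto> -p/(1 - p)\<close> sends
  into the unit disc; the result is \<open>z \<phi>(z)\<close> with \<open>\<phi>(0) = -A\<close> and \<open>\<phi>'(0) = -B\<close>. By the
  Schwarz lemma \<open>|\<phi>| \<le> 1\<close>, and the Schwarz--Pick inequality at the origin gives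
  \<open>|B| \<le> 1 - |A|\<^sup>2\<close>. Since \<open>det T\<^sub>3\<^sub>,\<^sub>1(f) = Re(A\<^sup>2 cnj B)/12 - |A|\<^sup>2/2 - |B|\<^sup>2/36 + 1\<close>,
  both bounds reduce to an inequality in the two real variables \<open>|A|\<^sup>2\<close> and \<open>|B|\<close>.
  Equality holds for \<open>z - z\<^sup>2/2\<close> and for \<open>z\<close> respectively.\<close>

lemma norm_lt_norm_one_minus_iff:
  fixes h :: complex
  shows "cmod h < cmod (1 - h) \<longleftrightarrow> Re h < 1/2"
proof -
  have "cmod h < cmod (1 - h) \<longleftrightarrow> (cmod h)\<^sup>2 < (cmod (1 - h))\<^sup>2"
    by (meson norm_ge_zero not_le power_mono_iff zero_less_numeral)
  also have "\<dots> \<longleftrightarrow> Re h < 1/2"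
    by (simp only: cmod_power2) (simp add: power2_eq_square algebra_simps)
  finally show ?thesis .
qed

lemma Schwarz_Pick_at_0:
  assumes hol: "\<phi> holomorphic_on ball 0 1" and lt1: "\<And>z. cmod z < 1 \<Longrightarrow> cmod (\<phi> z) < 1"
  shows "cmod (deriv \<phi> 0) \<le> 1 - (cmod (\<phi> 0))\<^sup>2"
proof -
  define c where "c = \<phi> 0"
  have c1: "cmod c < 1" using lt1[of 0] by (simp add: c_def)
  define \<psi> where "\<psi> = Moebius_function 0 c \<circ> \<phi>"
  have den: "0 < 1 - (cmod c)\<^sup>2"
    using c1 by (simp add: power_less_one_iff abs_less_iff)
  define D where "D = 1 - cnj c * c"
  have D: "D = of_real (1 - (cmod c)\<^sup>2)"
    by (simp add: D_def complex_norm_square[symmetric] mult.commute del: of_real_power)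
  have "D \<noteq> 0" using den unfolding D of_real_eq_0_iff by simp
  have "\<phi> ` ball 0 1 \<subseteq> ball 0 1" using lt1 by auto
  then have hol\<psi>: "\<psi> holomorphic_on ball 0 1"
    unfolding \<psi>_def by (rule holomorphic_on_compose_gen[OF hol Moebius_function_holomorphic[OF c1]])
  have "\<psi> 0 = 0" by (simp add: \<psi>_def c_def Moebius_function_eq_zero)
  moreover have "cmod (\<psi> z) < 1" if "cmod z < 1" for z
    using Moebius_function_norm_lt_1[OF c1 lt1[OF that]] by (simp add: \<psi>_def)
  ultimately have Schwarz: "cmod (deriv \<psi> 0) \<le> 1"
    using Schwarz_Lemma(2)[OF hol\<psi>, where \<xi>=0] by simp
  have "((\<lambda>z. (z - c) / (1 - cnj c * z)) has_field_derivative
          (1 * D - (c - c) * (- cnj c)) / (D * D)) (at c)"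
    unfolding D_def using \<open>D \<noteq> 0\<close>
    by (intro DERIV_divide) (auto simp: D_def intro!: derivative_eq_intros)
  then have "(Moebius_function 0 c has_field_derivative 1 / D) (at c)"
    using \<open>D \<noteq> 0\<close> by (simp add: Moebius_function_simple[abs_def])
  moreover have "(\<phi> has_field_derivative deriv \<phi> 0) (at 0)"
    by (rule holomorphic_derivI[OF hol open_ball]) simp
  ultimately have "(\<psi> has_field_derivative deriv \<phi> 0 / D) (at 0)"
    unfolding \<psi>_def c_def using DERIV_chain by (metis c_def times_divide_eq_left mult_1)
  then have "cmod (deriv \<psi> 0) = cmod (deriv \<phi> 0) / (1 - (cmod c)\<^sup>2)"
    unfolding D by (simp only: DERIV_imp_deriv norm_divide norm_of_real abs_of_pos[OF den])
  with Schwarz den show ?thesis by (simp add: c_def divide_le_eq)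
qed

text \<open>Apply the strict version to \<open>r \<phi>\<close> and let \<open>r \<rightarrow> 1\<close>.\<close>

lemma Schwarz_Pick_at_0_le:
  assumes hol: "\<phi> holomorphic_on ball 0 1" and le1: "\<And>z. cmod z < 1 \<Longrightarrow> cmod (\<phi> z) \<le> 1"
  shows "cmod (deriv \<phi> 0) \<le> 1 - (cmod (\<phi> 0))\<^sup>2"
proof -
  have scaled: "r * cmod (deriv \<phi> 0) \<le> 1 - r\<^sup>2 * (cmod (\<phi> 0))\<^sup>2" if r: "0 < r" "r < 1" for r :: real
  proof -
    have "(\<lambda>z. of_real r * \<phi> z) holomorphic_on ball 0 1" using hol by (intro holomorphic_intros)
    moreover have "cmod (of_real r * \<phi> z) < 1" if "cmod z < 1" for z
    proof -
      have "r * cmod (\<phi> z) \<le> r" using le1[OF that] r by (simp add: mult_left_le)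
      moreover have "cmod (of_real r * \<phi> z) = r * cmod (\<phi> z)" using r by (simp add: norm_mult)
      ultimately show ?thesis using r by linarith
    qed
    moreover have "deriv (\<lambda>z. of_real r * \<phi> z) 0 = of_real r * deriv \<phi> 0"
      using hol by (intro deriv_cmult holomorphic_on_imp_differentiable_at) auto
    ultimately show ?thesis
      using Schwarz_Pick_at_0[of "\<lambda>z. of_real r * \<phi> z"] r by (simp add: norm_mult power_mult_distrib)
  qed
  have "((\<lambda>r. r * cmod (deriv \<phi> 0)) \<longlongrightarrow> 1 * cmod (deriv \<phi> 0)) (at_left 1)"
    and "((\<lambda>r. 1 - r\<^sup>2 * (cmod (\<phi> 0))\<^sup>2) \<longlongrightarrow> 1 - 1\<^sup>2 * (cmod (\<phi> 0))\<^sup>2) (at_left (1::real))"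
    by (intro tendsto_intros)+
  moreover have "eventually (\<lambda>r. r * cmod (deriv \<phi> 0) \<le> 1 - r\<^sup>2 * (cmod (\<phi> 0))\<^sup>2) (at_left 1)"
    using eventually_at_left_real[of 0 1] scaled by (auto elim!: eventually_mono)
  ultimately show ?thesis
    using tendsto_le[OF trivial_limit_at_left_real] by fastforce
qed

lemma norm_le_1_if_norm_mult_lt_1:
  assumes hol: "\<phi> holomorphic_on ball 0 1" and lt1: "\<And>z. cmod z < 1 \<Longrightarrow> cmod (z * \<phi> z) < 1"
    and z: "cmod z < 1"
  shows "cmod (\<phi> z) \<le> 1"
proof -
  define \<omega> where "\<omega> = (\<lambda>z. z * \<phi> z)"
  have hol\<omega>: "\<omega> holomorphic_on ball 0 1" unfolding \<omega>_def using hol by (intro holomorphic_intros)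
  have \<omega>0: "\<omega> 0 = 0" by (simp add: \<omega>_def)
  have \<omega>lt1: "\<And>z. cmod z < 1 \<Longrightarrow> cmod (\<omega> z) < 1" using lt1 by (simp add: \<omega>_def)
  show ?thesis
  proof (cases "z = 0")
    case True
    have "(\<phi> has_field_derivative deriv \<phi> 0) (at 0)"
      by (rule holomorphic_derivI[OF hol open_ball]) simp
    then have "(\<omega> has_field_derivative 1 * \<phi> 0 + deriv \<phi> 0 * 0) (at 0)"
      unfolding \<omega>_def by (intro DERIV_mult DERIV_ident)
    then have "deriv \<omega> 0 = \<phi> 0" by (simp add: DERIV_imp_deriv)
    with Schwarz_Lemma(2)[OF hol\<omega> \<omega>0 \<omega>lt1 z] True show ?thesis by simp
  next
    case False
    with Schwarz_Lemma(1)[OF hol\<omega> \<omega>0 \<omega>lt1 z] show ?thesis by (simp add: \<omega>_def norm_mult)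
  qed
qed

lemma DERIV_minus_divide_one_minus_mult_at_0:
  assumes "(g has_field_derivative g') (at 0)"
  shows "((\<lambda>z. - g z / (1 - z * g z)) has_field_derivative - (g' + (g 0)\<^sup>2)) (at 0)"
proof -
  have "((\<lambda>z. - g z / (1 - z * g z)) has_field_derivative
          (- g' * (1 - 0 * g 0) - (- g 0) * (0 - (1 * g 0 + g' * 0))) / ((1 - 0 * g 0) * (1 - 0 * g 0))) (at 0)"
    by (intro DERIV_divide DERIV_minus DERIV_diff DERIV_const DERIV_mult DERIV_ident assms) simp
  then show ?thesis by (simp add: power2_eq_square)
qed

lemma classG1_Schwarz_function:
  assumes "classG 1 f"
  obtains \<phi> :: "complex \<Rightarrow> complex"
  where "\<phi> holomorphic_on ball 0 1" "\<And>z. cmod z < 1 \<Longrightarrow> cmod (z * \<phi> z) < 1"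
    "\<phi> 0 = - deriv (deriv f) 0" "deriv \<phi> 0 = - deriv (deriv (deriv f)) 0"
proof -
  define f1 f2 where "f1 = deriv f" and "f2 = deriv (deriv f)"
  have hol: "f holomorphic_on ball 0 1" and f1_0: "f1 0 = 1"
    and nz: "\<And>z. z \<in> ball 0 1 \<Longrightarrow> f1 z \<noteq> 0"
    and re: "\<And>z. z \<in> ball 0 1 \<Longrightarrow> Re (1 + z * f2 z / f1 z) < 1 + 1/2"
    using assms unfolding classG_def classA_def f1_def f2_def by auto
  have hol1: "f1 holomorphic_on ball 0 1" unfolding f1_def by (rule holomorphic_deriv[OF hol open_ball])
  have hol2: "f2 holomorphic_on ball 0 1"
    unfolding f2_def f1_def[symmetric] by (rule holomorphic_deriv[OF hol1 open_ball])
  define g where "g = (\<lambda>z. f2 z / f1 z)"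
  \<comment> \<open>\<open>z \<phi> z = -p/(1 - p)\<close> with \<open>p = z g z\<close>, the Cayley image of the half-plane \<open>Re p < 1/2\<close>\<close>
  define \<phi> where "\<phi> = (\<lambda>z. - g z / (1 - z * g z))"
  have re': "Re (z * g z) < 1/2" if "cmod z < 1" for z
    using re[of z] that by (simp add: g_def)
  then have nz': "1 - z * g z \<noteq> 0" if "cmod z < 1" for z
    using that by fastforce
  show thesis
  proof
    show "\<phi> holomorphic_on ball 0 1"
      unfolding \<phi>_def g_def using hol1 hol2 nz nz' by (intro holomorphic_intros) (auto simp: g_def)
    show "cmod (z * \<phi> z) < 1" if "cmod z < 1" for z
    proof -
      have "cmod (z * g z) < cmod (1 - z * g z)" using re'[OF that] norm_lt_norm_one_minus_iff by blast
      then show ?thesis using nz'[OF that] by (simp add: \<phi>_def norm_divide norm_mult divide_less_eq)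
    qed
    show "\<phi> 0 = - deriv (deriv f) 0" by (simp add: \<phi>_def g_def f1_0 f2_def)
    have df1: "(f1 has_field_derivative f2 0) (at 0)" unfolding f2_def f1_def[symmetric]
      by (rule holomorphic_derivI[OF hol1 open_ball]) simp
    have df2: "(f2 has_field_derivative deriv f2 0) (at 0)"
      by (rule holomorphic_derivI[OF hol2 open_ball]) simp
    have "(g has_field_derivative deriv f2 0 - (f2 0)\<^sup>2) (at 0)"
      unfolding g_def using DERIV_divide[OF df2 df1] f1_0 by (simp add: power2_eq_square)
    from DERIV_minus_divide_one_minus_mult_at_0[OF this]
    have "(\<phi> has_field_derivative - deriv f2 0) (at 0)"
      by (simp add: \<phi>_def g_def f1_0)
    then show "deriv \<phi> 0 = - deriv (deriv (deriv f)) 0"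
      by (simp add: DERIV_imp_deriv f2_def)
  qed
qed

lemma classG1_deriv3_bound:
  assumes "classG 1 f"
  shows "cmod (deriv (deriv (deriv f)) 0) \<le> 1 - (cmod (deriv (deriv f) 0))\<^sup>2"
proof -
  obtain \<phi> where hol: "\<phi> holomorphic_on ball 0 1" and lt1: "\<And>z. cmod z < 1 \<Longrightarrow> cmod (z * \<phi> z) < 1"
    and "\<phi> 0 = - deriv (deriv f) 0" "deriv \<phi> 0 = - deriv (deriv (deriv f)) 0"
    using classG1_Schwarz_function[OF assms] by blast
  moreover have "cmod (deriv \<phi> 0) \<le> 1 - (cmod (\<phi> 0))\<^sup>2"
    using Schwarz_Pick_at_0_le[OF hol norm_le_1_if_norm_mult_lt_1[OF hol lt1]] .
  ultimately show ?thesis by simp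
qed

lemma detT31_eq_derivs:
  "detT31 f = Re ((deriv (deriv f) 0)\<^sup>2 * cnj (deriv (deriv (deriv f)) 0)) / 12
     - (cmod (deriv (deriv f) 0))\<^sup>2 / 2 - (cmod (deriv (deriv (deriv f)) 0))\<^sup>2 / 36 + 1"
proof -
  have tcoeff: "tcoeff f 2 = deriv (deriv f) 0 / 2" "tcoeff f 3 = deriv (deriv (deriv f)) 0 / 6"
    by (simp_all add: tcoeff_def numeral_2_eq_2 numeral_3_eq_3 fact_Suc)
  have "(x / 2)\<^sup>2 * cnj (y / 6) = x\<^sup>2 * cnj y / 24" for x y :: complex
    by (simp add: power2_eq_square)
  then show ?thesis
    unfolding detT31_def tcoeff by (simp add: norm_divide power_divide)
qed

lemma det_expression_bounds:
  fixes t b X :: real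
  assumes "0 \<le> t" "0 \<le> b" "b \<le> 1 - t" "\<bar>X\<bar> \<le> t * b"
  shows "1/2 \<le> X/12 - t/2 - b\<^sup>2/36 + 1" and "X/12 - t/2 - b\<^sup>2/36 + 1 \<le> 1"
proof -
  have "t * b \<le> t * (1 - t)" and "b\<^sup>2 \<le> (1 - t)\<^sup>2" and "0 \<le> (1 - t) * (17 - 2 * t)"
    using assms by (auto intro: mult_left_mono power_mono mult_nonneg_nonneg)
  then show "1/2 \<le> X/12 - t/2 - b\<^sup>2/36 + 1"
    using assms(4) by (simp add: power2_eq_square algebra_simps)
  have "t * b \<le> t" using assms by (simp add: mult_left_le)
  then have "X \<le> t" using abs_le_D1[OF assms(4)] by linarith
  then show "X/12 - t/2 - b\<^sup>2/36 + 1 \<le> 1"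
    using assms(1) zero_le_power2[of b] by linarith
qed

lemma classG1_extremal_lower:
  shows "classG 1 (\<lambda>z. z - z\<^sup>2 / 2)" and "detT31 (\<lambda>z. z - z\<^sup>2 / 2) = 1/2"
proof -
  have d1: "deriv (\<lambda>z. z - z\<^sup>2 / 2) = (\<lambda>z::complex. 1 - z)"
    by (rule ext, rule DERIV_imp_deriv) (auto intro!: derivative_eq_intros)
  have d2: "deriv (\<lambda>z. 1 - z) = (\<lambda>z::complex. - 1)"
    by (rule ext, rule DERIV_imp_deriv) (auto intro!: derivative_eq_intros)
  have d3: "deriv (\<lambda>z. - 1) = (\<lambda>z::complex. 0)"
    by (rule ext, rule DERIV_imp_deriv) (auto intro!: derivative_eq_intros)
  have "Re (z * - 1 / (1 - z)) < 1/2" if "cmod z < 1" for z :: complex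
  proof -
    have "z \<noteq> 1" using that by auto
    then have "1 - z * - 1 / (1 - z) = 1 / (1 - z)" by (simp add: field_simps)
    moreover have "cmod (z * - 1 / (1 - z)) < cmod (1 / (1 - z))"
      using that \<open>z \<noteq> 1\<close> by (simp add: norm_divide divide_strict_right_mono)
    ultimately show ?thesis using norm_lt_norm_one_minus_iff by metis
  qed
  then show "classG 1 (\<lambda>z. z - z\<^sup>2 / 2)"
    unfolding classG_def classA_def d1 d2 by (auto intro!: holomorphic_intros)
  show "detT31 (\<lambda>z. z - z\<^sup>2 / 2) = 1/2"
    unfolding detT31_eq_derivs d1 d2 d3 by simp
qed

lemma classG1_identity:
  shows "classG 1 (\<lambda>z. z)" and "detT31 (\<lambda>z. z) = 1"
proof -
  have d1: "deriv (\<lambda>z. z) = (\<lambda>z::complex. 1)" and d2: "deriv (\<lambda>z. 1) = (\<lambda>z::complex. 0)"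
    by (rule ext, rule DERIV_imp_deriv, auto intro!: derivative_eq_intros)+
  show "classG 1 (\<lambda>z. z)" unfolding classG_def classA_def d1 d2 by auto
  show "detT31 (\<lambda>z. z) = 1" unfolding detT31_eq_derivs d1 d2 by simp
qed

theorem theorem4:
  shows "(\<forall>f. classG 1 f \<longrightarrow> 1/2 \<le> detT31 f \<and> detT31 f \<le> 1)
         \<and> (\<exists>f. classG 1 f \<and> detT31 f = 1/2)
         \<and> (\<exists>f. classG 1 f \<and> detT31 f = 1)"
proof (intro conjI allI impI)
  fix f assume "classG 1 f"
  define A B where "A = deriv (deriv f) 0" and "B = deriv (deriv (deriv f)) 0"
  have B_bound: "cmod B \<le> 1 - (cmod A)\<^sup>2"
    using classG1_deriv3_bound[OF \<open>classG 1 f\<close>] by (simp add: A_def B_def)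
  have Re_bound: "\<bar>Re (A\<^sup>2 * cnj B)\<bar> \<le> (cmod A)\<^sup>2 * cmod B"
    using abs_Re_le_cmod[of "A\<^sup>2 * cnj B"] by (simp add: norm_mult norm_power)
  show "1/2 \<le> detT31 f" "detT31 f \<le> 1"
    unfolding detT31_eq_derivs A_def[symmetric] B_def[symmetric]
    by (rule det_expression_bounds[OF zero_le_power2 norm_ge_zero B_bound Re_bound])+
next
  show "\<exists>f. classG 1 f \<and> detT31 f = 1/2" using classG1_extremal_lower by blast
  show "\<exists>f. classG 1 f \<and> detT31 f = 1" using classG1_identity by blast
qed

end
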